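(* Let $\Gamma$ be a group generated by a finite set $X$. If $\Gamma$ has solvable Equality Problem on a set $S\times S$, where $S\subset\mathbb F_X$ is UB-generic, then $\Gamma$ has solvable Word Problem.
   Context: $\mathbb F_X$ is the free group on $X$, $\pi:\mathbb F_X\to\Gamma$ the canonical epimorphism, $|\omega|$ the reduced word length, $B_n=\{\omega\in\mathbb F_X:|\omega|\le n\}$. $S\subset\mathbb F_X$ is UB-generic if $\limsup_{n\to\infty}\max_{\omega\in\mathbb F_X}\frac{|S\cap\omega B_n|}{|B_n|}=1$. $\Gamma$ has solvable Word Problem if there is an algorithm deciding for every $\omega\in\mathbb F_X$ whether $\pi(\omega)$ is trivial. $\Gamma$ has solvable Equality Problem on $T\subset\mathbb F_X^2$ if there is a partial algorithm that halts at least on every $(\omega_1,\omega_2)\in T$ and, whenever it halts, correctly decides whether $\pi(\omega_1)=\pi(\omega_2)$. *)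

theory Defs
  imports Complex_Main "HOL-Algebra.Generated_Groups" "HOL-Library.Nat_Bijection"
    "HOL-Library.Extended_Real" "HOL-Library.Liminf_Limsup"
begin

datatype recf =
    Zf
  | Sf
  | Idf nat nat                 (* Idf n i : projection on the i-th of n arguments *)
  | Cn nat recf "recf list"
  | Pr nat recf recf
  | Mn nat recf

inductive rec_eval :: "recf \<Rightarrow> nat list \<Rightarrow> nat \<Rightarrow> bool" where
  ev_Z: "rec_eval Zf xs 0"
| ev_S: "rec_eval Sf [x] (Suc x)"
| ev_Id: "length xs = n \<Longrightarrow> i < n \<Longrightarrow> rec_eval (Idf n i) xs (xs ! i)"
| ev_Cn: "length xs = n \<Longrightarrow> list_all2 (\<lambda>g y. rec_eval g xs y) gs ys \<Longrightarrow>
           rec_eval f ys z \<Longrightarrow> rec_eval (Cn n f gs) xs z"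
| ev_Pr0: "length xs = n \<Longrightarrow> rec_eval f xs y \<Longrightarrow> rec_eval (Pr n f g) (0 # xs) y"
| ev_PrS: "length xs = n \<Longrightarrow> rec_eval (Pr n f g) (x # xs) y \<Longrightarrow>
           rec_eval g (x # y # xs) z \<Longrightarrow> rec_eval (Pr n f g) (Suc x # xs) z"
| ev_Mn: "length xs = n \<Longrightarrow> rec_eval f (y # xs) 0 \<Longrightarrow>
           (\<forall>z<y. \<exists>v. v \<noteq> 0 \<and> rec_eval f (z # xs) v) \<Longrightarrow> rec_eval (Mn n f) xs y"

text \<open>A letter \<open>(i, False)\<close> stands for the generator \<open>x_i\<close>, \<open>(i, True)\<close> for its inverse.\<close>

type_synonym letter = "nat \<times> bool"

definition inv_letter :: "letter \<Rightarrow> letter" where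
  "inv_letter l = (fst l, \<not> snd l)"

fun reduced :: "letter list \<Rightarrow> bool" where
  "reduced (a # b # w) = (b \<noteq> inv_letter a \<and> reduced (b # w))"
| "reduced _ = True"

text \<open>Elements of the free group F_X: reduced words over X and its inverses.\<close>
definition free_group_words :: "nat \<Rightarrow> letter list set" where
  "free_group_words k = {w. reduced w \<and> (\<forall>l\<in>set w. fst l < k)}"

definition cancel_cons :: "letter \<Rightarrow> letter list \<Rightarrow> letter list" where
  "cancel_cons a w = (case w of [] \<Rightarrow> [a] | b # w' \<Rightarrow> (if b = inv_letter a then w' else a # w))"

definition reduce :: "letter list \<Rightarrow> letter list" where
  "reduce w = foldr cancel_cons w []"

definition fg_mult :: "letter list \<Rightarrow> letter list \<Rightarrow> letter list" where
  "fg_mult u v = reduce (u @ v)"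

definition ball_fg :: "nat \<Rightarrow> nat \<Rightarrow> letter list set" where
  "ball_fg k n = {w \<in> free_group_words k. length w \<le> n}"

definition UB_generic :: "nat \<Rightarrow> letter list set \<Rightarrow> bool" where
  "UB_generic k S \<longleftrightarrow>
     limsup (\<lambda>n. ereal (SUP \<omega>\<in>free_group_words k.
        real (card (S \<inter> fg_mult \<omega> ` ball_fg k n)) / real (card (ball_fg k n)))) = 1"

definition letter_val :: "('g, 'b) monoid_scheme \<Rightarrow> (nat \<Rightarrow> 'g) \<Rightarrow> letter \<Rightarrow> 'g" where
  "letter_val G x l = (if snd l then inv\<^bsub>G\<^esub> (x (fst l)) else x (fst l))"

definition word_val :: "('g, 'b) monoid_scheme \<Rightarrow> (nat \<Rightarrow> 'g) \<Rightarrow> letter list \<Rightarrow> 'g" where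
  "word_val G x w = foldr (\<lambda>l g. letter_val G x l \<otimes>\<^bsub>G\<^esub> g) w \<one>\<^bsub>G\<^esub>"

definition letter_code :: "letter \<Rightarrow> nat" where
  "letter_code l = 2 * fst l + (if snd l then 1 else 0)"

definition word_code :: "letter list \<Rightarrow> nat" where
  "word_code w = list_encode (map letter_code w)"

definition word_problem_solvable ::
    "('g, 'b) monoid_scheme \<Rightarrow> nat \<Rightarrow> (nat \<Rightarrow> 'g) \<Rightarrow> bool" where
  "word_problem_solvable G k x \<longleftrightarrow>
     (\<exists>P. \<forall>w\<in>free_group_words k.
        rec_eval P [word_code w] (if word_val G x w = \<one>\<^bsub>G\<^esub> then 1 else 0))"

definition equality_problem_solvable_on ::
    "('g, 'b) monoid_scheme \<Rightarrow> nat \<Rightarrow> (nat \<Rightarrow> 'g) \<Rightarrow> (letter list \<times> letter list) set \<Rightarrow> bool" where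
  "equality_problem_solvable_on G k x T \<longleftrightarrow>
     (\<exists>P. (\<forall>(u, v)\<in>T. \<exists>r. rec_eval P [word_code u, word_code v] r) \<and>
          (\<forall>u\<in>free_group_words k. \<forall>v\<in>free_group_words k. \<forall>r.
             rec_eval P [word_code u, word_code v] r \<longrightarrow>
             r = (if word_val G x u = word_val G x v then 1 else 0)))"

end

theory Submission
  imports Defs
begin

text \<open>Fix \<open>w \<in> F_X\<close> and let \<open>C\<close> be the number of words of length at most
  \<open>|w|\<close>. Since \<open>S\<close> is UB-generic, some translate \<open>\<omega>B_n\<close> with \<open>n \<ge> |w|\<close> has fewer than
  \<open>|B_n|/2C\<close> elements outside \<open>S\<close>. As \<open>|B_n| \<le> C |B_(n-|w|)|\<close>, the two injective maps
  \<open>u \<mapsto> \<omega>u\<close> and \<open>u \<mapsto> \<omega>uw\<close> from \<open>B_(n-|w|)\<close> to \<open>\<omega>B_n\<close> both hit \<open>S\<close> at some common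
  \<open>u\<close>, giving \<open>a \<in> S\<close> with \<open>aw \<in> S\<close>. The equality algorithm halts on \<open>(a, aw)\<close>, and
  \<open>\<pi>(w) = 1\<close> iff \<open>\<pi>(a) = \<pi>(aw)\<close>.

  Such an \<open>a\<close> need not be computable from \<open>w\<close>, so the word problem is decided by
  dovetailing: find the least pair \<open>(c, t)\<close> such that the equality algorithm, run for
  \<open>t\<close> steps on the \<open>c\<close>-th word \<open>u\<close> of \<open>F_X\<close> and on \<open>uw\<close>, halts, and return its answer,
  which is correct whatever \<open>u\<close> is. Running a program for \<open>t\<close> steps is a total recursive
  function of \<open>t\<close> and the input, given by a clocked interpreter of \<open>recf\<close> that is itself
  compiled into a \<open>recf\<close> program.\<close>

definition computes :: "nat \<Rightarrow> recf \<Rightarrow> (nat list \<Rightarrow> nat) \<Rightarrow> bool" where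
  "computes n f F \<longleftrightarrow> (\<forall>xs. length xs = n \<longrightarrow> rec_eval f xs (F xs))"

lemma computesD: "computes n f F \<Longrightarrow> length xs = n \<Longrightarrow> rec_eval f xs (F xs)"
  unfolding computes_def by blast

lemma computes_cong:
  "computes n f F \<Longrightarrow> (\<And>xs. length xs = n \<Longrightarrow> F xs = G xs) \<Longrightarrow> computes n f G"
  unfolding computes_def by auto

lemma computes_Zf: "computes n Zf (\<lambda>_. 0)"
  unfolding computes_def by (simp add: ev_Z)

lemma computes_Sf: "computes 1 Sf (\<lambda>xs. Suc (hd xs))"
  unfolding computes_def by (auto simp: length_Suc_conv ev_S)

lemma computes_Idf: "i < n \<Longrightarrow> computes n (Idf n i) (\<lambda>xs. xs ! i)"
  unfolding computes_def by (simp add: ev_Id)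

lemma computes_Cn:
  assumes "list_all2 (\<lambda>g G. computes n g G) gs Gs" "computes (length gs) f F"
  shows "computes n (Cn n f gs) (\<lambda>xs. F (map (\<lambda>G. G xs) Gs))"
  unfolding computes_def
proof (intro allI impI)
  fix xs :: "nat list"
  assume len: "length xs = n"
  have args: "list_all2 (\<lambda>g y. rec_eval g xs y) gs (map (\<lambda>G. G xs) Gs)"
    using assms(1) len by (auto simp: list_all2_conv_all_nth computes_def)
  have "length (map (\<lambda>G. G xs) Gs) = length gs"
    using list_all2_lengthD[OF assms(1)] by simp
  then have "rec_eval f (map (\<lambda>G. G xs) Gs) (F (map (\<lambda>G. G xs) Gs))"
    by (rule computesD[OF assms(2)])
  with args show "rec_eval (Cn n f gs) xs (F (map (\<lambda>G. G xs) Gs))"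
    by (rule ev_Cn[OF len])
qed

lemma computes_Cn1:
  "computes 1 f F \<Longrightarrow> computes n g G \<Longrightarrow> computes n (Cn n f [g]) (\<lambda>xs. F [G xs])"
  using computes_Cn[of n "[g]" "[G]" f F] by simp

lemma computes_Cn2:
  "computes 2 f F \<Longrightarrow> computes n g G \<Longrightarrow> computes n h H \<Longrightarrow>
    computes n (Cn n f [g, h]) (\<lambda>xs. F [G xs, H xs])"
  using computes_Cn[of n "[g, h]" "[G, H]" f F] by (simp add: numeral_2_eq_2)

lemma list_all2_computes_map:
  "(\<And>g. g \<in> set gs \<Longrightarrow> computes n (p g) (P g)) \<Longrightarrow>
    list_all2 (\<lambda>g G. computes n g G) (map p gs) (map P gs)"
  by (induction gs) auto

lemma list_all2_computes_Idf:
  "(\<And>i. i \<in> set is \<Longrightarrow> i < n) \<Longrightarrow>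
    list_all2 (\<lambda>g G. computes n g G) (map (Idf n) is) (map (\<lambda>i xs. xs ! i) is)"
  by (rule list_all2_computes_map) (simp add: computes_Idf)

text \<open>The arities are separate hypotheses so that the rule also applies to numeral arities.\<close>

lemma computes_Pr:
  assumes "computes n f F" "computes m g G" "m = Suc (Suc n)" "l = Suc n"
  shows "computes l (Pr n f g) (\<lambda>xs. rec_nat (F (tl xs)) (\<lambda>i r. G (i # r # tl xs)) (hd xs))"
  unfolding computes_def
proof (intro allI impI)
  fix xs :: "nat list"
  assume "length xs = l"
  then obtain x ys where xs: "xs = x # ys" and len: "length ys = n"
    using assms(4) by (cases xs) auto
  have "rec_eval (Pr n f g) (x # ys) (rec_nat (F ys) (\<lambda>i r. G (i # r # ys)) x)"
  proof (induction x)
    case 0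
    show ?case using assms(1) len by (simp add: computes_def ev_Pr0)
  next
    case (Suc x)
    let ?r = "rec_nat (F ys) (\<lambda>i r. G (i # r # ys)) x"
    have "rec_eval g (x # ?r # ys) (G (x # ?r # ys))"
      using assms(2,3) len by (simp add: computes_def)
    from ev_PrS[OF len Suc this] show ?case by simp
  qed
  then show "rec_eval (Pr n f g) xs (rec_nat (F (tl xs)) (\<lambda>i r. G (i # r # tl xs)) (hd xs))"
    by (simp add: xs)
qed

lemma rec_eval_Mn_Least:
  assumes "computes (Suc n) f F" "length xs = n" "F (y # xs) = 0"
  shows "rec_eval (Mn n f) xs (LEAST y. F (y # xs) = 0)"
proof -
  let ?y = "LEAST y. F (y # xs) = 0"
  have "F (?y # xs) = 0" using assms(3) by (rule LeastI)
  moreover have "\<forall>z<?y. F (z # xs) \<noteq> 0" using not_less_Least by blast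
  moreover have "\<And>z. rec_eval f (z # xs) (F (z # xs))"
    using assms(1,2) by (simp add: computes_def)
  ultimately show ?thesis using ev_Mn[OF assms(2), of f ?y] by metis
qed

lemma computes_Mn:
  assumes "computes (Suc n) f F" "\<And>xs. length xs = n \<Longrightarrow> \<exists>y. F (y # xs) = 0"
  shows "computes n (Mn n f) (\<lambda>xs. LEAST y. F (y # xs) = 0)"
  unfolding computes_def using rec_eval_Mn_Least assms by blast

definition prog_add :: "recf" where
  "prog_add = Pr 1 (Idf 1 0) (Cn 3 Sf [Idf 3 1])"

definition prog_pred :: "recf" where
  "prog_pred = Pr 0 Zf (Idf 2 0)"

definition prog_monus :: "recf" where
  "prog_monus = Pr 1 (Idf 1 0) (Cn 3 prog_pred [Idf 3 1])"

definition prog_mul :: "recf" where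
  "prog_mul = Pr 1 Zf (Cn 3 prog_add [Idf 3 1, Idf 3 2])"

lemma computes_prog_add: "computes 2 prog_add (\<lambda>xs. xs ! 0 + xs ! 1)"
proof -
  have step: "computes 3 (Cn 3 Sf [Idf 3 1]) (\<lambda>xs. Suc (hd [xs ! 1]))"
    by (rule computes_Cn1[OF computes_Sf computes_Idf]) simp
  have "rec_nat y (\<lambda>i r. Suc r) x = x + y" for x y :: nat
    by (induction x) auto
  then show ?thesis
    unfolding prog_add_def
    by (intro computes_cong[OF computes_Pr[OF computes_Idf step]])
      (auto simp: length_Suc_conv numeral_2_eq_2)
qed

lemma computes_prog_pred: "computes 1 prog_pred (\<lambda>xs. xs ! 0 - 1)"
proof -
  have "rec_nat 0 (\<lambda>i r. i) x = x - 1" for x :: nat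
    by (induction x) auto
  then show ?thesis
    unfolding prog_pred_def
    by (intro computes_cong[OF computes_Pr[OF computes_Zf computes_Idf]])
      (auto simp: length_Suc_conv)
qed

lemma computes_prog_monus: "computes 2 prog_monus (\<lambda>xs. xs ! 1 - xs ! 0)"
proof -
  have step: "computes 3 (Cn 3 prog_pred [Idf 3 1]) (\<lambda>xs. [xs ! 1] ! 0 - 1)"
    by (rule computes_Cn1[OF computes_prog_pred computes_Idf]) simp
  have "rec_nat y (\<lambda>i r. r - 1) x = y - x" for x y :: nat
    by (induction x) auto
  then show ?thesis
    unfolding prog_monus_def
    by (intro computes_cong[OF computes_Pr[OF computes_Idf step]])
      (auto simp: length_Suc_conv numeral_2_eq_2)
qed

lemma computes_prog_mul: "computes 2 prog_mul (\<lambda>xs. xs ! 0 * xs ! 1)"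
proof -
  have step: "computes 3 (Cn 3 prog_add [Idf 3 1, Idf 3 2])
      (\<lambda>xs. [xs ! 1, xs ! 2] ! 0 + [xs ! 1, xs ! 2] ! 1)"
    by (rule computes_Cn2[OF computes_prog_add computes_Idf computes_Idf]) simp_all
  have "rec_nat 0 (\<lambda>i r. r + y) x = x * y" for x y :: nat
    by (induction x) auto
  then show ?thesis
    unfolding prog_mul_def
    by (intro computes_cong[OF computes_Pr[OF computes_Zf step]])
      (auto simp: length_Suc_conv numeral_2_eq_2)
qed

fun rf_const :: "nat \<Rightarrow> nat \<Rightarrow> recf" where
  "rf_const n 0 = Zf"
| "rf_const n (Suc c) = Cn n Sf [rf_const n c]"

definition rf_add :: "nat \<Rightarrow> recf \<Rightarrow> recf \<Rightarrow> recf" where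
  "rf_add n p q = Cn n prog_add [p, q]"

definition rf_mul :: "nat \<Rightarrow> recf \<Rightarrow> recf \<Rightarrow> recf" where
  "rf_mul n p q = Cn n prog_mul [p, q]"

definition rf_sub :: "nat \<Rightarrow> recf \<Rightarrow> recf \<Rightarrow> recf" where
  "rf_sub n p q = Cn n prog_monus [q, p]"

definition rf_pred :: "nat \<Rightarrow> recf \<Rightarrow> recf" where
  "rf_pred n p = Cn n prog_pred [p]"

definition rf_not :: "nat \<Rightarrow> recf \<Rightarrow> recf" where
  "rf_not n p = rf_sub n (rf_const n 1) p"

definition rf_sg :: "nat \<Rightarrow> recf \<Rightarrow> recf" where
  "rf_sg n p = rf_not n (rf_not n p)"

definition rf_if :: "nat \<Rightarrow> recf \<Rightarrow> recf \<Rightarrow> recf \<Rightarrow> recf" where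
  "rf_if n c p q = rf_add n (rf_mul n (rf_sg n c) p) (rf_mul n (rf_not n c) q)"

definition rf_eq :: "nat \<Rightarrow> recf \<Rightarrow> recf \<Rightarrow> recf" where
  "rf_eq n p q = rf_not n (rf_add n (rf_sub n p q) (rf_sub n q p))"

definition rf_less :: "nat \<Rightarrow> recf \<Rightarrow> recf \<Rightarrow> recf" where
  "rf_less n p q = rf_sg n (rf_sub n q p)"

lemma computes_rf_const: "computes n (rf_const n c) (\<lambda>_. c)"
proof (induction c)
  case 0
  show ?case by (simp add: computes_Zf)
next
  case (Suc c)
  from computes_Cn1[OF computes_Sf Suc] show ?case by simp
qed

lemma computes_rf_add:
  "computes n p P \<Longrightarrow> computes n q Q \<Longrightarrow> computes n (rf_add n p q) (\<lambda>xs. P xs + Q xs)"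
  unfolding rf_add_def using computes_Cn2[OF computes_prog_add] by simp

lemma computes_rf_mul:
  "computes n p P \<Longrightarrow> computes n q Q \<Longrightarrow> computes n (rf_mul n p q) (\<lambda>xs. P xs * Q xs)"
  unfolding rf_mul_def using computes_Cn2[OF computes_prog_mul] by simp

lemma computes_rf_sub:
  "computes n p P \<Longrightarrow> computes n q Q \<Longrightarrow> computes n (rf_sub n p q) (\<lambda>xs. P xs - Q xs)"
  unfolding rf_sub_def using computes_Cn2[OF computes_prog_monus] by simp

lemma computes_rf_pred: "computes n p P \<Longrightarrow> computes n (rf_pred n p) (\<lambda>xs. P xs - 1)"
  unfolding rf_pred_def using computes_Cn1[OF computes_prog_pred] by simp

lemma computes_rf_not:
  "computes n p P \<Longrightarrow> computes n (rf_not n p) (\<lambda>xs. if P xs = 0 then 1 else 0)"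
  unfolding rf_not_def by (rule computes_cong[OF computes_rf_sub[OF computes_rf_const]]) auto

lemma computes_rf_sg:
  "computes n p P \<Longrightarrow> computes n (rf_sg n p) (\<lambda>xs. if P xs = 0 then 0 else 1)"
  unfolding rf_sg_def by (rule computes_cong[OF computes_rf_not[OF computes_rf_not]]) auto

lemma computes_rf_eq:
  "computes n p P \<Longrightarrow> computes n q Q \<Longrightarrow>
    computes n (rf_eq n p q) (\<lambda>xs. if P xs = Q xs then 1 else 0)"
  unfolding rf_eq_def
  by (rule computes_cong[OF computes_rf_not[OF
        computes_rf_add[OF computes_rf_sub computes_rf_sub]]]) auto

lemma computes_rf_less:
  "computes n p P \<Longrightarrow> computes n q Q \<Longrightarrow>
    computes n (rf_less n p q) (\<lambda>xs. if P xs < Q xs then 1 else 0)"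
  unfolding rf_less_def by (rule computes_cong[OF computes_rf_sg[OF computes_rf_sub]]) auto

lemma computes_rf_if:
  "computes n c C \<Longrightarrow> computes n p P \<Longrightarrow> computes n q Q \<Longrightarrow>
    computes n (rf_if n c p q) (\<lambda>xs. if C xs \<noteq> 0 then P xs else Q xs)"
  unfolding rf_if_def
  by (rule computes_cong[OF computes_rf_add[OF computes_rf_mul[OF computes_rf_sg]
        computes_rf_mul[OF computes_rf_not]]]) auto

section \<open>Clocked evaluation\<close>

text \<open>The recursion is the one computed by \<open>bounded_least_step\<close>;
  \<open>bounded_least_eq\<close> gives the closed form.\<close>

fun bounded_least :: "(nat \<Rightarrow> bool) \<Rightarrow> nat \<Rightarrow> nat" where
  "bounded_least P 0 = 0"
| "bounded_least P (Suc j) =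
    bounded_least P j + (if bounded_least P j = j \<and> \<not> P j then 1 else 0)"

lemma bounded_least_eq:
  "bounded_least P j = (if \<exists>z<j. P z then LEAST z. P z else j)"
proof (induction j)
  case 0
  show ?case by simp
next
  case (Suc j)
  show ?case
  proof (cases "\<exists>z<j. P z")
    case True
    then have "(LEAST z. P z) < j" using Least_le le_less_trans by blast
    then show ?thesis using Suc True by (auto simp: less_Suc_eq)
  next
    case False
    then have "P j \<Longrightarrow> (LEAST z. P z) = j" by (intro Least_equality) (auto simp: not_less)
    then show ?thesis using Suc False by (auto simp: less_Suc_eq)
  qed
qed

text \<open>\<open>clocked_eval f t xs\<close> is \<open>Suc y\<close> if \<open>f\<close> halts on \<open>xs\<close> with output \<open>y\<close> when every
  unbounded search \<open>Mn\<close> is cut off at \<open>t\<close>, and \<open>0\<close> otherwise.\<close>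

primrec clocked_eval :: "recf \<Rightarrow> nat \<Rightarrow> nat list \<Rightarrow> nat" where
  "clocked_eval Zf = (\<lambda>t xs. 1)"
| "clocked_eval Sf = (\<lambda>t xs. if length xs = 1 then Suc (Suc (hd xs)) else 0)"
| "clocked_eval (Idf n i) = (\<lambda>t xs. if length xs = n \<and> i < n then Suc (xs ! i) else 0)"
| "clocked_eval (Cn n f gs) = (\<lambda>t xs.
      if length xs = n \<and> (\<forall>h\<in>set (map clocked_eval gs). h t xs \<noteq> 0)
      then clocked_eval f t (map (\<lambda>h. h t xs - 1) (map clocked_eval gs)) else 0)"
| "clocked_eval (Pr n f g) = (\<lambda>t xs. case xs of
      [] \<Rightarrow> 0
    | x # ys \<Rightarrow> if length ys = n
        then rec_nat (clocked_eval f t ys)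
          (\<lambda>i r. if r = 0 then 0 else clocked_eval g t (i # (r - 1) # ys)) x
        else 0)"
| "clocked_eval (Mn n f) = (\<lambda>t xs.
      let z = bounded_least (\<lambda>z. clocked_eval f t (z # xs) \<le> 1) t in
      if length xs = n \<and> z < t \<and> clocked_eval f t (z # xs) = 1 then Suc z else 0)"

lemma clocked_eval_Cn:
  "clocked_eval (Cn n f gs) t xs =
    (if length xs = n \<and> (\<forall>g\<in>set gs. clocked_eval g t xs \<noteq> 0)
     then clocked_eval f t (map (\<lambda>g. clocked_eval g t xs - 1) gs) else 0)"
  by (auto simp: comp_def)

lemma clocked_eval_Mn_eq_Suc:
  "clocked_eval (Mn n f) t xs = Suc y \<longleftrightarrow>
    length xs = n \<and> y < t \<and> clocked_eval f t (y # xs) = 1 \<and>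
    (\<forall>z<y. 1 < clocked_eval f t (z # xs))" (is "?lhs \<longleftrightarrow> ?rhs")
proof
  let ?P = "\<lambda>z. clocked_eval f t (z # xs) \<le> 1"
  assume ?lhs
  then have "length xs = n" and "bounded_least ?P t < t" and y: "y = bounded_least ?P t"
    and "clocked_eval f t (y # xs) = 1"
    by (auto simp: Let_def split: if_splits)
  moreover have "y = (LEAST z. ?P z)"
    using \<open>bounded_least ?P t < t\<close> y by (auto simp: bounded_least_eq split: if_splits)
  then have "\<forall>z<y. 1 < clocked_eval f t (z # xs)"
    using not_less_Least[of _ ?P] by (simp add: not_le)
  ultimately show ?rhs by simp
next
  let ?P = "\<lambda>z. clocked_eval f t (z # xs) \<le> 1"
  assume ?rhs
  then have "(LEAST z. ?P z) = y" by (intro Least_equality) (auto simp: not_less[symmetric])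
  with \<open>?rhs\<close> show ?lhs by (auto simp: bounded_least_eq Let_def)
qed

declare clocked_eval.simps(4,6) [simp del]

lemma rec_eval_Pr_of_rec_nat:
  assumes len: "length ys = n"
    and f: "\<And>y. c = Suc y \<Longrightarrow> rec_eval f ys y"
    and g: "\<And>zs y. h zs = Suc y \<Longrightarrow> rec_eval g zs y"
  shows "rec_nat c (\<lambda>i r. if r = 0 then 0 else h (i # (r - 1) # ys)) x = Suc y \<Longrightarrow>
    rec_eval (Pr n f g) (x # ys) y"
proof (induction x arbitrary: y)
  case 0
  then show ?case using f by (simp add: ev_Pr0[OF len])
next
  case (Suc x)
  let ?r = "rec_nat c (\<lambda>i r. if r = 0 then 0 else h (i # (r - 1) # ys)) x"
  from Suc.prems have "?r = Suc (?r - 1)" and "h (x # (?r - 1) # ys) = Suc y"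
    by (auto split: if_splits)
  then have "rec_eval (Pr n f g) (x # ys) (?r - 1)" and "rec_eval g (x # (?r - 1) # ys) y"
    using Suc.IH g by auto
  then show ?case by (rule ev_PrS[OF len])
qed

lemma rec_eval_of_clocked_eval: "clocked_eval f t xs = Suc y \<Longrightarrow> rec_eval f xs y"
proof (induction f arbitrary: xs y)
  case Zf
  then show ?case by (simp add: ev_Z)
next
  case Sf
  then show ?case by (auto split: if_splits simp: length_Suc_conv intro: ev_S)
next
  case (Idf n i)
  then show ?case by (auto split: if_splits intro!: ev_Id)
next
  case (Cn n f gs)
  let ?ys = "map (\<lambda>g. clocked_eval g t xs - 1) gs"
  from Cn.prems have len: "length xs = n" and halts: "\<forall>g\<in>set gs. clocked_eval g t xs \<noteq> 0"
    and "clocked_eval f t ?ys = Suc y"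
    by (auto simp: clocked_eval_Cn split: if_splits)
  then have "rec_eval f ?ys y" using Cn.IH(1) by blast
  moreover have "list_all2 (\<lambda>g y. rec_eval g xs y) gs ?ys"
    using halts Cn.IH(2) by (auto simp: list_all2_conv_all_nth gr0_conv_Suc)
  ultimately show ?case using ev_Cn[OF len] by blast
next
  case (Pr n f g)
  then obtain x ys where xs: "xs = x # ys" and len: "length ys = n"
    by (auto split: if_splits list.splits)
  have "rec_nat (clocked_eval f t ys)
      (\<lambda>i r. if r = 0 then 0 else clocked_eval g t (i # (r - 1) # ys)) x = Suc y"
    using Pr.prems by (simp add: xs len)
  then show ?case
    unfolding xs using rec_eval_Pr_of_rec_nat[OF len] Pr.IH by blast
next
  case (Mn n f)
  then have len: "length xs = n" and "clocked_eval f t (y # xs) = Suc 0"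
    and "\<forall>z<y. \<exists>v. clocked_eval f t (z # xs) = Suc v \<and> v \<noteq> 0"
    by (auto simp: clocked_eval_Mn_eq_Suc) (metis Suc_lessE)
  with Mn.IH have "rec_eval f (y # xs) 0" and "\<forall>z<y. \<exists>v. v \<noteq> 0 \<and> rec_eval f (z # xs) v"
    by blast+
  then show ?case by (rule ev_Mn[OF len])
qed

lemma eventually_clocked_eval:
  "rec_eval f xs y \<Longrightarrow> eventually (\<lambda>t. clocked_eval f t xs = Suc y) at_top"
proof (induction rule: rec_eval.induct)
  case (ev_Cn xs n gs ys f z)
  have len: "length ys = length gs" using ev_Cn.IH(1) by (simp add: list_all2_lengthD)
  have "\<forall>i\<in>{..<length gs}. eventually (\<lambda>t. clocked_eval (gs ! i) t xs = Suc (ys ! i)) at_top"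
    using ev_Cn.IH(1) by (auto simp: list_all2_conv_all_nth)
  then have "eventually (\<lambda>t. \<forall>i\<in>{..<length gs}. clocked_eval (gs ! i) t xs = Suc (ys ! i))
      at_top"
    by (rule eventually_ball_finite[rotated]) simp
  with ev_Cn.IH(2) show ?case
  proof eventually_elim
    case (elim t)
    then have "map (\<lambda>g. clocked_eval g t xs - 1) gs = ys" by (intro nth_equalityI) (auto simp: len)
    moreover have "\<forall>g\<in>set gs. clocked_eval g t xs \<noteq> 0"
      using elim by (auto simp: in_set_conv_nth)
    ultimately show ?case using elim ev_Cn.hyps(1) by (simp add: clocked_eval_Cn)
  qed
next
  case (ev_PrS xs n f g x y z)
  from ev_PrS.IH show ?case
    by eventually_elim (simp add: ev_PrS.hyps)
next
  case (ev_Mn xs n f y)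
  have "\<forall>z\<in>{..<y}. eventually (\<lambda>t. 1 < clocked_eval f t (z # xs)) at_top"
    using ev_Mn.IH(2) by (fastforce elim: eventually_mono)
  then have "eventually (\<lambda>t. \<forall>z\<in>{..<y}. 1 < clocked_eval f t (z # xs)) at_top"
    by (rule eventually_ball_finite[rotated]) simp
  with ev_Mn.IH(1) eventually_gt_at_top[of y] show ?case
    by eventually_elim (simp add: clocked_eval_Mn_eq_Suc ev_Mn.hyps)
qed simp_all

section \<open>Compiling clocked evaluation\<close>

lemma map_nth_upt_eq_drop: "length xs = k \<Longrightarrow> map (nth xs) [a..<k] = drop a xs"
  by (rule nth_equalityI) auto

lemma computes_Cn_Idf:
  assumes "computes (length is) f F" "\<forall>i\<in>set is. i < n"
  shows "computes n (Cn n f (map (Idf n) is)) (\<lambda>xs. F (map (nth xs) is))"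
  using computes_Cn[OF list_all2_computes_Idf, of "is" n f F] assms by (simp add: comp_def)

fun rf_all_nonzero :: "nat \<Rightarrow> recf list \<Rightarrow> recf" where
  "rf_all_nonzero n [] = rf_const n 1"
| "rf_all_nonzero n (p # ps) = rf_mul n (rf_sg n p) (rf_all_nonzero n ps)"

lemma computes_rf_all_nonzero:
  "list_all2 (\<lambda>p P. computes n p P) ps Ps \<Longrightarrow>
    computes n (rf_all_nonzero n ps) (\<lambda>xs. if \<forall>P\<in>set Ps. P xs \<noteq> 0 then 1 else 0)"
proof (induction rule: list_all2_induct)
  case Nil
  show ?case using computes_rf_const[of n 1] by simp
next
  case (Cons p ps P Ps)
  show ?case
    unfolding rf_all_nonzero.simps
    by (rule computes_cong[OF computes_rf_mul[OF computes_rf_sg[OF Cons.hyps(1)] Cons.IH]]) auto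
qed

definition rf_swap :: "nat \<Rightarrow> recf \<Rightarrow> recf" where
  "rf_swap n p = Cn n p (map (Idf n) (1 # 0 # [2..<n]))"

lemma computes_rf_swap:
  assumes "computes (Suc (Suc n)) p P"
  shows "computes (Suc (Suc n)) (rf_swap (Suc (Suc n)) p) (\<lambda>xs. P (xs ! 1 # xs ! 0 # drop 2 xs))"
proof -
  have "computes (length (1 # 0 # [2..<Suc (Suc n)])) p P" using assms by (simp del: upt_Suc)
  moreover have "\<forall>i\<in>set (1 # 0 # [2..<Suc (Suc n)]). i < Suc (Suc n)" by auto
  ultimately show ?thesis
    unfolding rf_swap_def
    by (rule computes_cong[OF computes_Cn_Idf]) (simp add: map_nth_upt_eq_drop del: upt_Suc)
qed

definition bounded_least_step :: "nat \<Rightarrow> recf \<Rightarrow> recf" where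
  "bounded_least_step n q = (let m = Suc (Suc (Suc n)) in
    rf_add m (Idf m 1)
      (rf_mul m (rf_eq m (Idf m 1) (Idf m 0)) (rf_sg m (Cn m q (map (Idf m) (2 # 0 # [3..<m]))))))"

definition bounded_least_prog :: "nat \<Rightarrow> recf \<Rightarrow> recf" where
  "bounded_least_prog n q =
    Cn (Suc n) (Pr (Suc n) Zf (bounded_least_step n q)) (map (Idf (Suc n)) (0 # [0..<Suc n]))"

lemma rec_nat_bounded_least:
  "rec_nat 0 (\<lambda>i r. r + (if r = i then 1 else 0) * (if P i then 0 else 1)) j = bounded_least P j"
  by (induction j) auto

lemma computes_bounded_least_prog:
  assumes "computes (Suc (Suc n)) q Q"
  shows "computes (Suc n) (bounded_least_prog n q)
    (\<lambda>ys. bounded_least (\<lambda>z. Q (hd ys # z # tl ys) = 0) (hd ys))"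
proof -
  let ?m = "Suc (Suc (Suc n))"
  have "computes (length (2 # 0 # [3..<?m])) q Q" using assms by (simp del: upt_Suc)
  then have test: "computes ?m (Cn ?m q (map (Idf ?m) (2 # 0 # [3..<?m])))
      (\<lambda>zs. Q (zs ! 2 # zs ! 0 # drop 3 zs))"
    by (rule computes_cong[OF computes_Cn_Idf]) (auto simp: map_nth_upt_eq_drop simp del: upt_Suc)
  have step: "computes ?m (bounded_least_step n q) (\<lambda>zs. zs ! 1 +
      (if zs ! 1 = zs ! 0 then 1 else 0) * (if Q (zs ! 2 # zs ! 0 # drop 3 zs) = 0 then 0 else 1))"
    unfolding bounded_least_step_def Let_def
    by (rule computes_cong[OF computes_rf_add[OF computes_Idf computes_rf_mul[OF
          computes_rf_eq[OF computes_Idf computes_Idf] computes_rf_sg[OF test]]]]) auto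
  have "computes (Suc (Suc n)) (Pr (Suc n) Zf (bounded_least_step n q))
      (\<lambda>ws. bounded_least (\<lambda>z. Q (ws ! 1 # z # drop 2 ws) = 0) (hd ws))"
    by (rule computes_cong[OF computes_Pr[OF computes_Zf step]])
      (auto simp: length_Suc_conv rec_nat_bounded_least[symmetric] numeral_2_eq_2 numeral_3_eq_3)
  then have "computes (length (0 # [0..<Suc n])) (Pr (Suc n) Zf (bounded_least_step n q))
      (\<lambda>ws. bounded_least (\<lambda>z. Q (ws ! 1 # z # drop 2 ws) = 0) (hd ws))"
    by (simp del: upt_Suc)
  then show ?thesis
    unfolding bounded_least_prog_def
    by (rule computes_cong[OF computes_Cn_Idf])
      (auto simp: map_nth_upt_eq_drop length_Suc_conv simp del: upt_Suc)
qed

definition clocked_Pr_step :: "nat \<Rightarrow> recf \<Rightarrow> recf" where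
  "clocked_Pr_step m G = (let M = Suc (Suc (Suc m)) in
    rf_mul M (rf_sg M (Idf M 1))
      (Cn M G ([Idf M 2, Idf M 0, rf_pred M (Idf M 1)] @ map (Idf M) [3..<M])))"

lemma computes_clocked_Pr_step:
  assumes "computes (Suc (Suc (Suc m))) G H"
  shows "computes (Suc (Suc (Suc m))) (clocked_Pr_step m G)
    (\<lambda>zs. if zs ! 1 = 0 then 0 else H (zs ! 2 # zs ! 0 # (zs ! 1 - 1) # drop 3 zs))"
proof -
  let ?M = "Suc (Suc (Suc m))"
  have args: "list_all2 (\<lambda>p P. computes ?M p P)
      ([Idf ?M 2, Idf ?M 0, rf_pred ?M (Idf ?M 1)] @ map (Idf ?M) [3..<?M])
      ([\<lambda>zs. zs ! 2, \<lambda>zs. zs ! 0, \<lambda>zs. zs ! 1 - 1] @ map (\<lambda>i zs. zs ! i) [3..<?M])"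
    by (intro list_all2_appendI list_all2_Cons[THEN iffD2] conjI list_all2_Nil[THEN iffD2]
        computes_Idf computes_rf_pred list_all2_computes_Idf) auto
  have "computes (length ([Idf ?M 2, Idf ?M 0, rf_pred ?M (Idf ?M 1)]
      @ map (Idf ?M) [3..<?M])) G H"
    using assms by (simp del: upt_Suc)
  note call = computes_Cn[OF args this]
  have "computes ?M (rf_sg ?M (Idf ?M 1)) (\<lambda>zs. if zs ! 1 = 0 then 0 else 1)"
    by (rule computes_rf_sg[OF computes_Idf]) simp
  from computes_rf_mul[OF this call] show ?thesis
    unfolding clocked_Pr_step_def Let_def
    by (rule computes_cong) (auto simp: map_nth_upt_eq_drop comp_def simp del: upt_Suc)
qed

definition clocked_Mn_prog :: "nat \<Rightarrow> recf \<Rightarrow> recf" where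
  "clocked_Mn_prog n F =
    (let z = bounded_least_prog n (rf_less (Suc (Suc n)) (rf_const (Suc (Suc n)) 1) F) in
     rf_mul (Suc n)
      (rf_mul (Suc n) (rf_less (Suc n) z (Idf (Suc n) 0))
        (rf_eq (Suc n) (Cn (Suc n) F (Idf (Suc n) 0 # z # map (Idf (Suc n)) [1..<Suc n]))
          (rf_const (Suc n) 1)))
      (Cn (Suc n) Sf [z]))"

lemma computes_clocked_Mn_prog:
  assumes "computes (Suc (Suc n)) F (\<lambda>ys. clocked_eval f (hd ys) (tl ys))"
  shows "computes (Suc n) (clocked_Mn_prog n F) (\<lambda>ys. clocked_eval (Mn n f) (hd ys) (tl ys))"
proof -
  let ?z = "bounded_least_prog n (rf_less (Suc (Suc n)) (rf_const (Suc (Suc n)) 1) F)"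
  let ?Z = "\<lambda>ys. bounded_least (\<lambda>z. clocked_eval f (hd ys) (z # tl ys) \<le> 1) (hd ys)"
  have z: "computes (Suc n) ?z ?Z"
    by (rule computes_cong[OF computes_bounded_least_prog[OF
          computes_rf_less[OF computes_rf_const assms]]]) (simp add: not_less)
  have "list_all2 (\<lambda>p P. computes (Suc n) p P)
      (Idf (Suc n) 0 # ?z # map (Idf (Suc n)) [1..<Suc n])
      ((\<lambda>ys. ys ! 0) # ?Z # map (\<lambda>i ys. ys ! i) [1..<Suc n])"
    by (intro list_all2_Cons[THEN iffD2] conjI computes_Idf z list_all2_computes_Idf) auto
  moreover have "computes (length (Idf (Suc n) 0 # ?z # map (Idf (Suc n)) [1..<Suc n])) F
      (\<lambda>ys. clocked_eval f (hd ys) (tl ys))"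
    using assms by (simp del: upt_Suc)
  ultimately have call:
    "computes (Suc n) (Cn (Suc n) F (Idf (Suc n) 0 # ?z # map (Idf (Suc n)) [1..<Suc n]))
      (\<lambda>ys. clocked_eval f (hd ys) (?Z ys # tl ys))"
    by (rule computes_cong[OF computes_Cn])
      (auto simp: map_nth_upt_eq_drop comp_def length_Suc_conv simp del: upt_Suc)
  have "computes (Suc n) (rf_less (Suc n) ?z (Idf (Suc n) 0))
      (\<lambda>ys. if ?Z ys < ys ! 0 then 1 else 0)"
    by (rule computes_rf_less[OF z computes_Idf]) simp
  from computes_rf_mul[OF computes_rf_mul[OF this computes_rf_eq[OF call computes_rf_const]]
      computes_Cn1[OF computes_Sf z]]
  show ?thesis
    unfolding clocked_Mn_prog_def Let_def
    by (rule computes_cong) (auto simp: clocked_eval.simps(6) hd_conv_nth length_Suc_conv)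
qed

definition clocked_Cn_prog :: "nat \<Rightarrow> recf \<Rightarrow> recf list \<Rightarrow> recf" where
  "clocked_Cn_prog n F Gs =
    rf_mul (Suc n) (rf_all_nonzero (Suc n) Gs)
      (Cn (Suc n) F (Idf (Suc n) 0 # map (rf_pred (Suc n)) Gs))"

lemma computes_clocked_Cn_prog:
  assumes "computes (Suc (length gs)) F (\<lambda>ys. clocked_eval f (hd ys) (tl ys))"
    and "\<And>g. g \<in> set gs \<Longrightarrow> computes (Suc n) (G g) (\<lambda>ys. clocked_eval g (hd ys) (tl ys))"
  shows "computes (Suc n) (clocked_Cn_prog n F (map G gs))
    (\<lambda>ys. clocked_eval (Cn n f gs) (hd ys) (tl ys))"
proof -
  let ?E = "\<lambda>g ys. clocked_eval g (hd ys) (tl ys)"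
  have all: "computes (Suc n) (rf_all_nonzero (Suc n) (map G gs))
      (\<lambda>ys. if \<forall>P\<in>set (map ?E gs). P ys \<noteq> 0 then 1 else 0)"
    by (rule computes_rf_all_nonzero[OF list_all2_computes_map[OF assms(2)]])
  have "list_all2 (\<lambda>p P. computes (Suc n) p P)
      (Idf (Suc n) 0 # map (\<lambda>g. rf_pred (Suc n) (G g)) gs)
      ((\<lambda>ys. ys ! 0) # map (\<lambda>g ys. ?E g ys - 1) gs)"
    by (intro list_all2_Cons[THEN iffD2] conjI computes_Idf list_all2_computes_map
        computes_rf_pred assms(2)) auto
  moreover have "computes (length (Idf (Suc n) 0 # map (\<lambda>g. rf_pred (Suc n) (G g)) gs)) F
      (\<lambda>ys. clocked_eval f (hd ys) (tl ys))"
    using assms(1) by simp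
  ultimately have
    "computes (Suc n) (Cn (Suc n) F (Idf (Suc n) 0 # map (\<lambda>g. rf_pred (Suc n) (G g)) gs))
      (\<lambda>ys. clocked_eval f (ys ! 0) (map (\<lambda>g. ?E g ys - 1) gs))"
    by (rule computes_cong[OF computes_Cn]) (simp add: comp_def)
  from computes_rf_mul[OF all this] show ?thesis
    unfolding clocked_Cn_prog_def map_map comp_def
    by (rule computes_cong) (auto simp: clocked_eval_Cn length_Suc_conv)
qed

definition clocked_Pr_prog :: "nat \<Rightarrow> recf \<Rightarrow> recf \<Rightarrow> recf" where
  "clocked_Pr_prog m F G = rf_swap (Suc (Suc m)) (Pr (Suc m) F (clocked_Pr_step m G))"

lemma computes_clocked_Pr_prog:
  assumes "computes (Suc m) F (\<lambda>ys. clocked_eval f (hd ys) (tl ys))"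
    and "computes (Suc (Suc (Suc m))) G (\<lambda>ys. clocked_eval g (hd ys) (tl ys))"
  shows "computes (Suc (Suc m)) (clocked_Pr_prog m F G)
    (\<lambda>ys. clocked_eval (Pr m f g) (hd ys) (tl ys))"
proof -
  have "computes (Suc (Suc m)) (Pr (Suc m) F (clocked_Pr_step m G))
      (\<lambda>ws. rec_nat (clocked_eval f (ws ! 1) (drop 2 ws))
        (\<lambda>i r. if r = 0 then 0 else clocked_eval g (ws ! 1) (i # (r - 1) # drop 2 ws)) (hd ws))"
    by (rule computes_cong[OF computes_Pr[OF assms(1) computes_clocked_Pr_step[OF assms(2)]]])
      (auto simp: length_Suc_conv eval_nat_numeral cong: if_cong)
  from computes_rf_swap[OF this] show ?thesis
    unfolding clocked_Pr_prog_def
    by (rule computes_cong) (auto simp: length_Suc_conv eval_nat_numeral cong: if_cong)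
qed

text \<open>\<open>clocked_prog f n\<close> computes \<open>clocked_eval f t xs\<close> from \<open>t # xs\<close> for \<open>length xs = n\<close>;
  the arity is a parameter because \<open>clocked_eval\<close> returns \<open>0\<close> on arguments of the wrong length.\<close>

primrec clocked_prog :: "recf \<Rightarrow> nat \<Rightarrow> recf" where
  "clocked_prog Zf = (\<lambda>n. rf_const (Suc n) 1)"
| "clocked_prog Sf = (\<lambda>n. if n = 1 then Cn 2 Sf [Cn 2 Sf [Idf 2 1]] else Zf)"
| "clocked_prog (Idf m i) =
    (\<lambda>n. if m = n \<and> i < n then Cn (Suc n) Sf [Idf (Suc n) (Suc i)] else Zf)"
| "clocked_prog (Cn m f gs) =
    (\<lambda>n. if m = n
         then clocked_Cn_prog n (clocked_prog f (length gs)) (map (\<lambda>c. c n) (map clocked_prog gs))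
         else Zf)"
| "clocked_prog (Pr m f g) =
    (\<lambda>n. if n = Suc m then clocked_Pr_prog m (clocked_prog f m) (clocked_prog g (Suc (Suc m)))
         else Zf)"
| "clocked_prog (Mn m f) = (\<lambda>n. if n = m then clocked_Mn_prog n (clocked_prog f (Suc n)) else Zf)"

lemma computes_clocked_prog:
  "computes (Suc n) (clocked_prog f n) (\<lambda>ys. clocked_eval f (hd ys) (tl ys))"
proof (induction f arbitrary: n)
  case Zf
  show ?case using computes_rf_const[of "Suc n" 1] by simp
next
  case Sf
  have "computes 2 (Cn 2 Sf [Cn 2 Sf [Idf 2 1]]) (\<lambda>xs. Suc (hd [Suc (hd [xs ! 1])]))"
    by (rule computes_Cn1[OF computes_Sf computes_Cn1[OF computes_Sf computes_Idf]]) simp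
  then show ?case
    by (auto intro!: computes_cong[OF computes_Zf] elim!: computes_cong
        simp: length_Suc_conv numeral_2_eq_2)
next
  case (Idf m i)
  have "i < n \<Longrightarrow> computes (Suc n) (Cn (Suc n) Sf [Idf (Suc n) (Suc i)]) (\<lambda>xs. Suc (hd [xs ! Suc i]))"
    by (rule computes_Cn1[OF computes_Sf computes_Idf]) simp
  then show ?case
    by (auto intro!: computes_cong[OF computes_Zf] elim!: computes_cong simp: length_Suc_conv)
next
  case (Cn m f gs)
  show ?case
  proof (cases "m = n")
    case True
    then show ?thesis using computes_clocked_Cn_prog[OF Cn.IH] by (simp add: comp_def)
  qed (auto intro!: computes_cong[OF computes_Zf] simp: length_Suc_conv clocked_eval_Cn)
next
  case (Pr m f g)
  show ?case
  proof (cases "n = Suc m")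
    case True
    then show ?thesis using computes_clocked_Pr_prog[OF Pr.IH] by simp
  qed (auto intro!: computes_cong[OF computes_Zf] simp: length_Suc_conv split: list.splits)
next
  case (Mn m f)
  show ?case
  proof (cases "n = m")
    case True
    then show ?thesis using computes_clocked_Mn_prog[OF Mn.IH] by simp
  qed (auto intro!: computes_cong[OF computes_Zf] simp: length_Suc_conv clocked_eval.simps(6))
qed

definition prog_triangle :: "recf" where
  "prog_triangle = Pr 0 Zf (Cn 2 prog_add [Cn 2 Sf [Idf 2 0], Idf 2 1])"

lemma computes_prog_triangle: "computes 1 prog_triangle (\<lambda>xs. triangle (xs ! 0))"
proof -
  have step: "computes 2 (Cn 2 prog_add [Cn 2 Sf [Idf 2 0], Idf 2 1])
      (\<lambda>xs. [Suc (hd [xs ! 0]), xs ! 1] ! 0 + [Suc (hd [xs ! 0]), xs ! 1] ! 1)"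
    by (rule computes_Cn2[OF computes_prog_add computes_Cn1[OF computes_Sf computes_Idf]
          computes_Idf]) simp_all
  have "rec_nat 0 (\<lambda>i r. Suc (i + r)) x = triangle x" for x
    by (induction x) auto
  then show ?thesis
    unfolding prog_triangle_def
    by (intro computes_cong[OF computes_Pr[OF computes_Zf step]]) (auto simp: length_Suc_conv)
qed

definition rf_triangle :: "nat \<Rightarrow> recf \<Rightarrow> recf" where
  "rf_triangle n p = Cn n prog_triangle [p]"

lemma computes_rf_triangle:
  "computes n p P \<Longrightarrow> computes n (rf_triangle n p) (\<lambda>xs. triangle (P xs))"
  unfolding rf_triangle_def using computes_Cn1[OF computes_prog_triangle] by simp

definition diagonal :: "nat \<Rightarrow> nat" where
  "diagonal s = (LEAST d. s < triangle (Suc d))"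

lemma less_triangle_Suc_self: "s < triangle (Suc s)"
proof -
  have "s \<le> triangle s" by (induction s) auto
  then show ?thesis by simp
qed

lemma diagonal_bounds: "triangle (diagonal s) \<le> s" "s < triangle (Suc (diagonal s))"
proof -
  show "s < triangle (Suc (diagonal s))"
    unfolding diagonal_def by (rule LeastI[of _ s]) (rule less_triangle_Suc_self)
  show "triangle (diagonal s) \<le> s"
  proof (cases "diagonal s")
    case (Suc d)
    then have "\<not> s < triangle (Suc d)" unfolding diagonal_def by (metis lessI not_less_Least)
    then show ?thesis using Suc by simp
  qed simp
qed

lemma prod_decode_diagonal:
  "prod_decode s = (s - triangle (diagonal s), diagonal s - (s - triangle (diagonal s)))"
proof -
  let ?a = "s - triangle (diagonal s)" and ?b = "diagonal s - (s - triangle (diagonal s))"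
  have "?a \<le> diagonal s" using diagonal_bounds(2)[of s] by simp
  then have "prod_encode (?a, ?b) = s" using diagonal_bounds(1) by (simp add: prod_encode_def)
  then show ?thesis by (metis prod_encode_inverse)
qed

definition prog_diagonal :: "recf" where
  "prog_diagonal =
    Mn 1 (rf_not 2 (rf_less 2 (Idf 2 1) (rf_triangle 2 (Cn 2 Sf [Idf 2 0]))))"

lemma computes_prog_diagonal: "computes 1 prog_diagonal (\<lambda>xs. diagonal (xs ! 0))"
proof -
  have "computes 2 (rf_not 2 (rf_less 2 (Idf 2 1) (rf_triangle 2 (Cn 2 Sf [Idf 2 0]))))
      (\<lambda>xs. if xs ! 1 < triangle (Suc (xs ! 0)) then 0 else 1)"
    by (rule computes_cong[OF computes_rf_not[OF computes_rf_less[OF computes_Idf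
          computes_rf_triangle[OF computes_Cn1[OF computes_Sf computes_Idf]]]]]) simp_all
  then have "computes (Suc 1) (rf_not 2 (rf_less 2 (Idf 2 1) (rf_triangle 2 (Cn 2 Sf [Idf 2 0]))))
      (\<lambda>xs. if xs ! 1 < triangle (Suc (xs ! 0)) then 0 else 1)"
    by (simp add: numeral_2_eq_2)
  moreover have "\<exists>d. (if (d # xs) ! 1 < triangle (Suc ((d # xs) ! 0)) then 0 else 1) = (0::nat)"
    if "length xs = 1" for xs
    by (rule exI[of _ "xs ! 0"]) (simp add: less_triangle_Suc_self del: triangle_Suc)
  ultimately show ?thesis
    unfolding prog_diagonal_def
    by (rule computes_cong[OF computes_Mn]) (auto simp: diagonal_def)
qed

definition prog_fst :: "recf" where
  "prog_fst = rf_sub 1 (Idf 1 0) (rf_triangle 1 prog_diagonal)"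

definition prog_snd :: "recf" where
  "prog_snd = rf_sub 1 prog_diagonal prog_fst"

lemma computes_prog_fst: "computes 1 prog_fst (\<lambda>xs. fst (prod_decode (xs ! 0)))"
  unfolding prog_fst_def
  by (rule computes_cong[OF computes_rf_sub[OF computes_Idf
        computes_rf_triangle[OF computes_prog_diagonal]]]) (auto simp: prod_decode_diagonal)

lemma computes_prog_snd: "computes 1 prog_snd (\<lambda>xs. snd (prod_decode (xs ! 0)))"
  unfolding prog_snd_def
  by (rule computes_cong[OF computes_rf_sub[OF computes_prog_diagonal computes_prog_fst]])
    (auto simp: prod_decode_diagonal)

definition code_hd :: "nat \<Rightarrow> nat" where "code_hd c = fst (prod_decode (c - 1))"
definition code_tl :: "nat \<Rightarrow> nat" where "code_tl c = snd (prod_decode (c - 1))"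
definition code_cons :: "nat \<Rightarrow> nat \<Rightarrow> nat" where "code_cons x c = Suc (prod_encode (x, c))"

lemma code_hd_list_encode [simp]: "code_hd (list_encode (x # xs)) = x"
  by (simp add: code_hd_def)

lemma code_tl_list_encode [simp]: "code_tl (list_encode xs) = list_encode (tl xs)"
proof (cases xs)
  case Nil
  have "prod_decode 0 = (0, 0)"
    using prod_encode_inverse[of "(0, 0)"] by (simp add: prod_encode_def)
  with Nil show ?thesis by (simp add: code_tl_def)
qed (simp add: code_tl_def)

lemma code_cons_list_encode [simp]: "code_cons x (list_encode xs) = list_encode (x # xs)"
  by (simp add: code_cons_def)

definition rf_hd :: "nat \<Rightarrow> recf \<Rightarrow> recf" where
  "rf_hd n p = Cn n prog_fst [rf_pred n p]"

definition rf_tl :: "nat \<Rightarrow> recf \<Rightarrow> recf" where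
  "rf_tl n p = Cn n prog_snd [rf_pred n p]"

definition rf_cons :: "nat \<Rightarrow> recf \<Rightarrow> recf \<Rightarrow> recf" where
  "rf_cons n p q = Cn n Sf [rf_add n (rf_triangle n (rf_add n p q)) p]"

lemma computes_rf_hd: "computes n p P \<Longrightarrow> computes n (rf_hd n p) (\<lambda>xs. code_hd (P xs))"
  unfolding rf_hd_def code_hd_def using computes_Cn1[OF computes_prog_fst computes_rf_pred] by simp

lemma computes_rf_tl: "computes n p P \<Longrightarrow> computes n (rf_tl n p) (\<lambda>xs. code_tl (P xs))"
  unfolding rf_tl_def code_tl_def using computes_Cn1[OF computes_prog_snd computes_rf_pred] by simp

lemma computes_rf_cons:
  "computes n p P \<Longrightarrow> computes n q Q \<Longrightarrow> computes n (rf_cons n p q) (\<lambda>xs. code_cons (P xs) (Q xs))"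
  unfolding rf_cons_def code_cons_def prod_encode_def
  using computes_Cn1[OF computes_Sf computes_rf_add[OF computes_rf_triangle[OF computes_rf_add]]]
  by simp

definition prog_mod :: "nat \<Rightarrow> recf" where
  "prog_mod K =
    Pr 0 Zf (rf_mul 2 (Cn 2 Sf [Idf 2 1]) (rf_not 2 (rf_eq 2 (Cn 2 Sf [Idf 2 1]) (rf_const 2 K))))"

lemma computes_prog_mod:
  assumes "0 < K"
  shows "computes 1 (prog_mod K) (\<lambda>xs. xs ! 0 mod K)"
proof -
  have step: "computes 2
      (rf_mul 2 (Cn 2 Sf [Idf 2 1]) (rf_not 2 (rf_eq 2 (Cn 2 Sf [Idf 2 1]) (rf_const 2 K))))
      (\<lambda>xs. if Suc (xs ! 1) = K then 0 else Suc (xs ! 1))"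
    by (rule computes_cong[OF computes_rf_mul[OF computes_Cn1[OF computes_Sf computes_Idf]
          computes_rf_not[OF computes_rf_eq[OF computes_Cn1[OF computes_Sf computes_Idf]
            computes_rf_const]]]]) simp_all
  have "rec_nat 0 (\<lambda>i r. if Suc r = K then 0 else Suc r) x = x mod K" for x
    using assms by (induction x) (auto simp: mod_Suc)
  then show ?thesis
    unfolding prog_mod_def
    by (intro computes_cong[OF computes_Pr[OF computes_Zf step]])
      (auto simp: length_Suc_conv cong: if_cong)
qed

section \<open>Free reduction\<close>

lemma inv_letter_inv_letter [simp]: "inv_letter (inv_letter a) = a"
  by (simp add: inv_letter_def)

lemma reduced_Cons_iff: "reduced (a # w) \<longleftrightarrow> reduced w \<and> (w = [] \<or> hd w \<noteq> inv_letter a)"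
  by (cases w) auto

lemma reduced_cancel_cons: "reduced w \<Longrightarrow> reduced (cancel_cons a w)"
  by (cases w) (auto simp: cancel_cons_def reduced_Cons_iff)

lemma reduced_foldr_cancel_cons: "reduced v \<Longrightarrow> reduced (foldr cancel_cons z v)"
  by (induction z) (auto intro: reduced_cancel_cons)

lemma reduced_reduce: "reduced (reduce z)"
  unfolding reduce_def by (rule reduced_foldr_cancel_cons) simp

lemma cancel_cons_inv_letter: "reduced w \<Longrightarrow> cancel_cons a (cancel_cons (inv_letter a) w) = w"
  by (cases w rule: remdups_adj.cases) (auto simp: cancel_cons_def)

lemma foldr_cancel_cons_cancel_cons:
  assumes "reduced r" "reduced v"
  shows "foldr cancel_cons (cancel_cons a r) v = cancel_cons a (foldr cancel_cons r v)"
proof (cases r)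
  case (Cons b r')
  then show ?thesis
    using cancel_cons_inv_letter[OF reduced_foldr_cancel_cons[OF assms(2)], of a r']
    by (auto simp: cancel_cons_def)
qed (simp add: cancel_cons_def)

lemma foldr_cancel_cons_reduce:
  "reduced v \<Longrightarrow> foldr cancel_cons (reduce z) v = foldr cancel_cons z v"
  by (induction z)
    (simp_all add: reduce_def foldr_cancel_cons_cancel_cons[OF reduced_reduce[unfolded reduce_def]])

lemma reduce_reduced: "reduced w \<Longrightarrow> reduce w = w"
proof (induction w)
  case (Cons a w)
  then show ?case by (cases w) (auto simp: reduce_def cancel_cons_def reduced_Cons_iff)
qed (simp add: reduce_def)

lemma reduce_reduce_append: "reduce (reduce x @ y) = reduce (x @ y)"
  unfolding reduce_def using foldr_cancel_cons_reduce[OF reduced_reduce, of x y]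
  by (simp add: reduce_def)

lemma reduce_append_reduce: "reduce (x @ reduce y) = reduce (x @ y)"
  using reduce_reduced[OF reduced_reduce, of y] by (simp add: reduce_def)

lemma fg_mult_assoc: "fg_mult (fg_mult u v) w = fg_mult u (fg_mult v w)"
  unfolding fg_mult_def by (simp add: reduce_reduce_append reduce_append_reduce)

lemma fg_mult_eq_foldr: "reduced v \<Longrightarrow> fg_mult u v = foldr cancel_cons u v"
  unfolding fg_mult_def reduce_def using reduce_reduced[of v] by (simp add: reduce_def)

definition fg_inv :: "letter list \<Rightarrow> letter list" where
  "fg_inv w = rev (map inv_letter w)"

lemma fg_inv_fg_inv [simp]: "fg_inv (fg_inv w) = w"
  by (simp add: fg_inv_def rev_map comp_def)

lemma foldr_cancel_cons_fg_inv_append: "reduced v \<Longrightarrow> foldr cancel_cons (fg_inv z @ z) v = v"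
proof (induction z arbitrary: v)
  case (Cons a z)
  have "foldr cancel_cons (fg_inv (a # z) @ a # z) v =
      foldr cancel_cons (fg_inv z)
        (cancel_cons (inv_letter a) (cancel_cons a (foldr cancel_cons z v)))"
    by (simp add: fg_inv_def)
  also have "\<dots> = foldr cancel_cons (fg_inv z) (foldr cancel_cons z v)"
    using cancel_cons_inv_letter[OF reduced_foldr_cancel_cons[OF Cons.prems], of "inv_letter a"]
    by simp
  finally show ?case using Cons by simp
qed (simp add: fg_inv_def)

lemma reduce_fg_inv_append: "reduce (fg_inv z @ z) = []"
  unfolding reduce_def by (rule foldr_cancel_cons_fg_inv_append) simp

lemma reduce_append_fg_inv: "reduce (z @ fg_inv z) = []"
  using reduce_fg_inv_append[of "fg_inv z"] by simp

lemma fg_mult_left_cancel: "reduced u \<Longrightarrow> fg_mult (fg_inv w) (fg_mult w u) = u"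
  using reduce_reduce_append[of "fg_inv w @ w" u]
  by (simp add: fg_mult_def reduce_append_reduce reduce_fg_inv_append reduce_reduced)

lemma fg_mult_right_cancel: "reduced u \<Longrightarrow> fg_mult (fg_mult u w) (fg_inv w) = u"
  using reduce_append_reduce[of u "w @ fg_inv w"]
  by (simp add: fg_mult_def reduce_reduce_append reduce_append_fg_inv reduce_reduced)

lemma inj_on_fg_mult_left: "inj_on (fg_mult w) {u. reduced u}"
  by (rule inj_on_inverseI[where g = "fg_mult (fg_inv w)"]) (simp add: fg_mult_left_cancel)

lemma inj_on_fg_mult_right: "inj_on (\<lambda>u. fg_mult u w) {u. reduced u}"
  by (rule inj_on_inverseI[where g = "\<lambda>u. fg_mult u (fg_inv w)"]) (simp add: fg_mult_right_cancel)

lemma set_foldr_cancel_cons: "set (foldr cancel_cons z v) \<subseteq> set z \<union> set v"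
proof (induction z)
  case (Cons a z)
  have "set (cancel_cons a w) \<subseteq> insert a (set w)" for w
    by (cases w) (auto simp: cancel_cons_def)
  with Cons show ?case by fastforce
qed simp

lemma reduce_in_free_group_words: "\<forall>l\<in>set z. fst l < k \<Longrightarrow> reduce z \<in> free_group_words k"
  unfolding free_group_words_def using reduced_reduce[of z] set_foldr_cancel_cons[of z "[]"]
  by (auto simp: reduce_def)

lemma fg_mult_closed:
  "u \<in> free_group_words k \<Longrightarrow> v \<in> free_group_words k \<Longrightarrow> fg_mult u v \<in> free_group_words k"
  unfolding fg_mult_def by (rule reduce_in_free_group_words) (auto simp: free_group_words_def)

locale word_valuation = group G for G :: "('g, 'b) monoid_scheme" (structure) +
  fixes k :: nat and x :: "nat \<Rightarrow> 'g"
  assumes generators_closed: "x ` {..<k} \<subseteq> carrier G"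
begin

abbreviation letters_below :: "letter list \<Rightarrow> bool" where
  "letters_below w \<equiv> \<forall>l\<in>set w. fst l < k"

lemma letter_val_closed: "fst l < k \<Longrightarrow> letter_val G x l \<in> carrier G"
  using generators_closed by (auto simp: letter_val_def)

lemma word_val_Nil [simp]: "word_val G x [] = \<one>"
  by (simp add: word_val_def)

lemma word_val_Cons: "word_val G x (a # w) = letter_val G x a \<otimes> word_val G x w"
  by (simp add: word_val_def)

lemma word_val_closed: "letters_below w \<Longrightarrow> word_val G x w \<in> carrier G"
  by (induction w) (auto simp: word_val_Cons letter_val_closed)

lemma letter_val_inv_letter:
  "fst a < k \<Longrightarrow> letter_val G x a \<otimes> letter_val G x (inv_letter a) = \<one>"
  using generators_closed by (auto simp: letter_val_def inv_letter_def)

lemma word_val_cancel_cons: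
  assumes "fst a < k" "letters_below w"
  shows "word_val G x (cancel_cons a w) = letter_val G x a \<otimes> word_val G x w"
proof (cases w)
  case (Cons b w')
  show ?thesis
  proof (cases "b = inv_letter a")
    case True
    have "letter_val G x a \<otimes> word_val G x w =
        (letter_val G x a \<otimes> letter_val G x b) \<otimes> word_val G x w'"
      using Cons assms by (simp add: word_val_Cons m_assoc letter_val_closed word_val_closed)
    then show ?thesis
      using Cons True assms by (simp add: cancel_cons_def letter_val_inv_letter word_val_closed)
  qed (simp add: Cons cancel_cons_def word_val_Cons)
qed (simp add: cancel_cons_def word_val_Cons)

lemma word_val_reduce: "letters_below z \<Longrightarrow> word_val G x (reduce z) = word_val G x z"
proof (induction z)
  case (Cons a z)
  have "letters_below (reduce z)"
    using Cons.prems set_foldr_cancel_cons[of z "[]"] by (auto simp: reduce_def)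
  with Cons show ?case by (simp add: reduce_def word_val_cancel_cons word_val_Cons)
qed (simp add: reduce_def)

lemma word_val_append:
  "letters_below u \<Longrightarrow> letters_below v \<Longrightarrow>
    word_val G x (u @ v) = word_val G x u \<otimes> word_val G x v"
  by (induction u) (simp_all add: word_val_Cons m_assoc letter_val_closed word_val_closed)

lemma word_val_fg_mult:
  assumes "letters_below u" "letters_below v"
  shows "word_val G x (fg_mult u v) = word_val G x u \<otimes> word_val G x v"
proof -
  have "letters_below (u @ v)" using assms by auto
  then show ?thesis using assms by (simp add: fg_mult_def word_val_reduce word_val_append)
qed

lemma word_val_eq_fg_mult_iff:
  assumes "a \<in> free_group_words k" "w \<in> free_group_words k"
  shows "word_val G x a = word_val G x (fg_mult a w) \<longleftrightarrow> word_val G x w = \<one>"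
  using assms by (auto simp: free_group_words_def word_val_fg_mult word_val_closed l_cancel_one')

end

section \<open>UB-generic sets contain pairs \<open>(a, aw)\<close>\<close>

lemma reduced_take: "reduced w \<Longrightarrow> reduced (take j w)"
proof (induction w arbitrary: j)
  case (Cons a w)
  show ?case
  proof (cases j)
    case (Suc i)
    have "take i w = [] \<or> hd (take i w) \<noteq> inv_letter a"
      using Cons.prems by (cases w; cases i) auto
    with Suc Cons show ?thesis by (simp add: reduced_Cons_iff)
  qed simp
qed simp

lemma length_fg_mult: "length (fg_mult u v) \<le> length u + length v"
proof -
  have "length (cancel_cons a w) \<le> Suc (length w)" for a w
    by (cases w) (auto simp: cancel_cons_def)
  then have "length (foldr cancel_cons z []) \<le> length z" for z
    by (induction z) (auto intro: le_trans)
  from this[of "u @ v"] show ?thesis by (simp add: fg_mult_def reduce_def del: foldr_append)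
qed

abbreviation words_upto :: "nat \<Rightarrow> nat \<Rightarrow> letter list set" where
  "words_upto k m \<equiv> {s. set s \<subseteq> {..<k} \<times> UNIV \<and> length s \<le> m}"

lemma finite_words_upto: "finite (words_upto k m)"
  by (rule finite_lists_length_le) simp

lemma finite_ball_fg: "finite (ball_fg k n)"
  by (rule finite_subset[OF _ finite_words_upto[of k n]])
    (auto simp: ball_fg_def free_group_words_def)

lemma Nil_in_ball_fg: "[] \<in> ball_fg k n"
  by (simp add: ball_fg_def free_group_words_def)

text \<open>Every word of \<open>B_n\<close> splits into a word of \<open>B_(n-m)\<close> followed by an arbitrary
  word of length at most \<open>m\<close>.\<close>

lemma card_ball_fg_le:
  assumes "m \<le> n"
  shows "card (ball_fg k n) \<le> card (ball_fg k (n - m)) * card (words_upto k m)"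
proof -
  have "ball_fg k n \<subseteq> (\<lambda>(p, s). p @ s) ` (ball_fg k (n - m) \<times> words_upto k m)"
  proof
    fix v assume v: "v \<in> ball_fg k n"
    then have "take (n - m) v \<in> ball_fg k (n - m)"
      using reduced_take by (auto simp: ball_fg_def free_group_words_def dest: in_set_takeD)
    moreover have "drop (n - m) v \<in> words_upto k m"
      using v assms by (fastforce simp: ball_fg_def free_group_words_def dest: in_set_dropD)
    ultimately show "v \<in> (\<lambda>(p, s). p @ s) ` (ball_fg k (n - m) \<times> words_upto k m)"
      by (intro image_eqI[of _ _ "(take (n - m) v, drop (n - m) v)"]) auto
  qed
  then have "card (ball_fg k n) \<le> card ((\<lambda>(p, s). p @ s) ` (ball_fg k (n - m) \<times> words_upto k m))"
    by (rule card_mono[rotated]) (simp add: finite_ball_fg finite_words_upto)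
  also have "\<dots> \<le> card (ball_fg k (n - m) \<times> words_upto k m)"
    by (rule card_image_le) (simp add: finite_ball_fg finite_words_upto)
  finally show ?thesis by (simp add: card_cartesian_product)
qed

lemma UB_generic_large_translate:
  fixes \<delta> :: real
  assumes "UB_generic k S" "0 < \<delta>"
  shows "\<exists>n\<ge>m. \<exists>\<omega>\<in>free_group_words k.
    (1 - \<delta>) * card (ball_fg k n) < card (S \<inter> fg_mult \<omega> ` ball_fg k n)"
proof (rule ccontr)
  let ?r = "\<lambda>n \<omega>. real (card (S \<inter> fg_mult \<omega> ` ball_fg k n)) / real (card (ball_fg k n))"
  assume "\<not> ?thesis"
  moreover have "0 < card (ball_fg k n)" for n
    using finite_ball_fg Nil_in_ball_fg by (metis card_gt_0_iff empty_iff)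
  ultimately have "?r n \<omega> \<le> 1 - \<delta>" if "n \<ge> m" "\<omega> \<in> free_group_words k" for n \<omega>
    using that by (auto simp: not_less pos_divide_le_eq)
  moreover have "free_group_words k \<noteq> {}"
    using Nil_in_ball_fg by (auto simp: ball_fg_def)
  ultimately have "eventually (\<lambda>n. ereal (SUP \<omega>\<in>free_group_words k. ?r n \<omega>) \<le> ereal (1 - \<delta>))
      sequentially"
    unfolding eventually_sequentially by (auto intro!: exI[of _ m] cSUP_least)
  then have "limsup (\<lambda>n. ereal (SUP \<omega>\<in>free_group_words k. ?r n \<omega>)) \<le> ereal (1 - \<delta>)"
    by (rule Limsup_bounded)
  with assms show False unfolding UB_generic_def by simp
qed

lemma ex_both_images_in:
  assumes "finite B" "inj_on f D" "inj_on g D" "f ` D \<subseteq> B" "g ` D \<subseteq> B"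
    and "2 * card (B - A) < card D"
  shows "\<exists>u\<in>D. f u \<in> A \<and> g u \<in> A"
proof (rule ccontr)
  have bad: "card {u\<in>D. h u \<notin> A} \<le> card (B - A)" if "inj_on h D" "h ` D \<subseteq> B" for h
    using that assms(1) by (intro card_inj_on_le) (auto intro: inj_on_subset)
  have "finite D" using assms(6) card.infinite by fastforce
  assume "\<not> ?thesis"
  then have "D \<subseteq> {u\<in>D. f u \<notin> A} \<union> {u\<in>D. g u \<notin> A}" by blast
  then have "card D \<le> card ({u\<in>D. f u \<notin> A} \<union> {u\<in>D. g u \<notin> A})"
    using \<open>finite D\<close> by (intro card_mono) auto
  also have "\<dots> \<le> card {u\<in>D. f u \<notin> A} + card {u\<in>D. g u \<notin> A}" by (rule card_Un_le)
  also have "\<dots> \<le> 2 * card (B - A)" using bad[OF assms(2,4)] bad[OF assms(3,5)] by simp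
  finally show False using assms(6) by simp
qed

lemma UB_generic_few_outside_translate:
  assumes "UB_generic k S"
  shows "\<exists>n\<ge>m. \<exists>\<omega>. 2 * card (fg_mult \<omega> ` ball_fg k n - S) < card (ball_fg k (n - m))"
proof -
  define C where "C = card (words_upto k m)"
  have "[] \<in> words_upto k m" by simp
  then have "0 < C" unfolding C_def using finite_words_upto card_gt_0_iff by blast
  then obtain n \<omega> where n: "m \<le> n"
    and large: "(1 - 1 / (2 * C)) * card (ball_fg k n) < card (S \<inter> fg_mult \<omega> ` ball_fg k n)"
    using UB_generic_large_translate[OF assms, of "1 / (2 * C)" m] by auto
  let ?B = "fg_mult \<omega> ` ball_fg k n"
  have "card (?B \<inter> S) + card (?B - S) \<le> card (ball_fg k n)"
    using card_Int_Diff[of ?B S] card_image_le[OF finite_ball_fg, of "fg_mult \<omega>" k n]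
    by (simp add: finite_ball_fg)
  then have "real (card (?B - S)) < card (ball_fg k n) / (2 * C)"
    using large by (simp add: Int_commute algebra_simps)
  also have "\<dots> \<le> card (ball_fg k (n - m)) / 2"
    using card_ball_fg_le[OF n, of k] \<open>0 < C\<close> unfolding C_def[symmetric]
    by (simp add: field_simps flip: of_nat_mult)
  finally have "2 * card (?B - S) < card (ball_fg k (n - m))" by linarith
  with n show ?thesis by blast
qed

lemma UB_generic_ex_pair:
  assumes "S \<subseteq> free_group_words k" and "UB_generic k S" and w: "w \<in> free_group_words k"
  shows "\<exists>a\<in>S. fg_mult a w \<in> S"
proof -
  obtain n \<omega> where n: "length w \<le> n"
    and few_outside: "2 * card (fg_mult \<omega> ` ball_fg k n - S) < card (ball_fg k (n - length w))"
    using UB_generic_few_outside_translate[OF assms(2)] by blast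
  let ?B = "fg_mult \<omega> ` ball_fg k n" and ?D = "ball_fg k (n - length w)"
  have D_reduced: "?D \<subseteq> {u. reduced u}" by (auto simp: ball_fg_def free_group_words_def)
  have inj1: "inj_on (fg_mult \<omega>) ?D" by (rule inj_on_subset[OF inj_on_fg_mult_left D_reduced])
  have inj2: "inj_on (fg_mult \<omega> \<circ> (\<lambda>u. fg_mult u w)) ?D"
  proof (rule comp_inj_on)
    show "inj_on (\<lambda>u. fg_mult u w) ?D" by (rule inj_on_subset[OF inj_on_fg_mult_right D_reduced])
    show "inj_on (fg_mult \<omega>) ((\<lambda>u. fg_mult u w) ` ?D)"
      by (rule inj_on_subset[OF inj_on_fg_mult_left]) (auto simp: fg_mult_def reduced_reduce)
  qed
  have sub1: "fg_mult \<omega> ` ?D \<subseteq> ?B" by (auto simp: ball_fg_def)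
  have "(\<lambda>u. fg_mult u w) ` ?D \<subseteq> ball_fg k n"
  proof (rule image_subsetI)
    fix u assume "u \<in> ?D"
    then show "fg_mult u w \<in> ball_fg k n"
      using w n length_fg_mult[of u w] fg_mult_closed[of u k w] by (auto simp: ball_fg_def)
  qed
  then have sub2: "(fg_mult \<omega> \<circ> (\<lambda>u. fg_mult u w)) ` ?D \<subseteq> ?B"
    by (auto simp: image_comp[symmetric])
  obtain u where "fg_mult \<omega> u \<in> S" "fg_mult \<omega> (fg_mult u w) \<in> S"
    using ex_both_images_in[OF finite_imageI[OF finite_ball_fg] inj1 inj2 sub1 sub2 few_outside]
    by auto
  then show ?thesis by (metis fg_mult_assoc)
qed

definition letter_of_code :: "nat \<Rightarrow> letter" where
  "letter_of_code n = (n div 2, odd n)"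

lemma letter_code_of_code [simp]: "letter_code (letter_of_code n) = n"
  by (simp add: letter_of_code_def letter_code_def)

lemma letter_of_code_letter_code [simp]: "letter_of_code (letter_code l) = l"
  by (cases l) (auto simp: letter_of_code_def letter_code_def)

lemma letter_code_less: "fst l < k \<Longrightarrow> letter_code l < 2 * k"
  by (cases l) (auto simp: letter_code_def)

lemma fst_letter_of_code_less: "n < 2 * k \<Longrightarrow> fst (letter_of_code n) < k"
  by (auto simp: letter_of_code_def)

definition inv_code :: "nat \<Rightarrow> nat" where
  "inv_code n = (if even n then Suc n else n - 1)"

lemma letter_code_inv_letter: "letter_code (inv_letter a) = inv_code (letter_code a)"
  by (cases a) (auto simp: inv_code_def letter_code_def inv_letter_def)

definition rf_mod :: "nat \<Rightarrow> nat \<Rightarrow> recf \<Rightarrow> recf" where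
  "rf_mod n K p = Cn n (prog_mod K) [p]"

lemma computes_rf_mod:
  "0 < K \<Longrightarrow> computes n p P \<Longrightarrow> computes n (rf_mod n K p) (\<lambda>xs. P xs mod K)"
  unfolding rf_mod_def using computes_Cn1[OF computes_prog_mod] by simp

definition rf_inv_code :: "nat \<Rightarrow> recf \<Rightarrow> recf" where
  "rf_inv_code n p = rf_if n (rf_mod n 2 p) (rf_pred n p) (Cn n Sf [p])"

lemma computes_rf_inv_code:
  "computes n p P \<Longrightarrow> computes n (rf_inv_code n p) (\<lambda>xs. inv_code (P xs))"
  unfolding rf_inv_code_def inv_code_def
  by (rule computes_cong[OF computes_rf_if[OF computes_rf_mod computes_rf_pred
        computes_Cn1[OF computes_Sf]]]) auto

definition code_cancel_cons :: "nat \<Rightarrow> nat \<Rightarrow> nat" where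
  "code_cancel_cons l c = (if c \<noteq> 0 \<and> code_hd c = inv_code l then code_tl c else code_cons l c)"

definition rf_cancel_cons :: "nat \<Rightarrow> recf \<Rightarrow> recf \<Rightarrow> recf" where
  "rf_cancel_cons n p q =
    rf_if n (rf_mul n (rf_sg n q) (rf_eq n (rf_hd n q) (rf_inv_code n p)))
      (rf_tl n q) (rf_cons n p q)"

lemma computes_rf_cancel_cons:
  "computes n p P \<Longrightarrow> computes n q Q \<Longrightarrow>
    computes n (rf_cancel_cons n p q) (\<lambda>xs. code_cancel_cons (P xs) (Q xs))"
  unfolding rf_cancel_cons_def code_cancel_cons_def
  by (rule computes_cong[OF computes_rf_if[OF computes_rf_mul[OF computes_rf_sg
        computes_rf_eq[OF computes_rf_hd computes_rf_inv_code]] computes_rf_tl computes_rf_cons]])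
    auto

lemma word_code_Nil [simp]: "word_code [] = 0"
  by (simp add: word_code_def)

lemma word_code_cancel_cons:
  "word_code (cancel_cons a v) = code_cancel_cons (letter_code a) (word_code v)"
proof (cases v)
  case (Cons b v')
  have "letter_code b = inv_code (letter_code a) \<longleftrightarrow> b = inv_letter a"
    by (metis letter_code_inv_letter letter_of_code_letter_code)
  moreover have "list_encode (l # ls) \<noteq> 0" for l ls by simp
  ultimately show ?thesis
    using Cons by (simp add: cancel_cons_def code_cancel_cons_def word_code_def
        del: list_encode.simps)
qed (simp add: cancel_cons_def code_cancel_cons_def word_code_def code_cons_def)

definition cancel_cons_codes :: "nat \<Rightarrow> nat list \<Rightarrow> letter list \<Rightarrow> letter list" where
  "cancel_cons_codes K L = fold (\<lambda>l. cancel_cons (letter_of_code (l mod K))) L"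

lemma cancel_cons_codes_eq_foldr:
  "cancel_cons_codes K L v = foldr cancel_cons (rev (map (\<lambda>l. letter_of_code (l mod K)) L)) v"
  by (simp add: cancel_cons_codes_def foldr_conv_fold fold_map comp_def)

lemma cancel_cons_codes_eq_fg_mult:
  "reduced v \<Longrightarrow> cancel_cons_codes K L v = fg_mult (cancel_cons_codes K L []) v"
  by (simp add: cancel_cons_codes_eq_foldr fg_mult_eq_foldr foldr_cancel_cons_reduce
      flip: reduce_def)

text \<open>For \<open>K = 2 * k\<close>, the words \<open>enum_word K c\<close> with \<open>c \<in> \<nat>\<close> run through \<open>F_X\<close>.\<close>

definition enum_word :: "nat \<Rightarrow> nat \<Rightarrow> letter list" where
  "enum_word K c = cancel_cons_codes K (list_decode c) []"

lemma enum_word_in_free_group_words: "0 < k \<Longrightarrow> enum_word (2 * k) c \<in> free_group_words k"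
  unfolding enum_word_def cancel_cons_codes_eq_foldr reduce_def[symmetric]
  by (rule reduce_in_free_group_words) (auto intro!: fst_letter_of_code_less)

lemma enum_word_list_encode:
  assumes "a \<in> free_group_words k"
  shows "enum_word (2 * k) (list_encode (rev (map letter_code a))) = a"
proof -
  have "map (\<lambda>l. letter_of_code (l mod (2 * k))) (map letter_code a) = a"
    using assms by (auto simp: free_group_words_def letter_code_less intro!: map_idI)
  then show ?thesis
    using assms reduce_reduced[of a]
    by (simp add: enum_word_def cancel_cons_codes_eq_foldr rev_map free_group_words_def
        flip: reduce_def)
qed

lemma code_tl_funpow_list_encode: "(code_tl ^^ i) (list_encode L) = list_encode (drop i L)"
  by (induction i) (auto simp: drop_Suc tl_drop)

definition code_fold :: "nat \<Rightarrow> nat \<Rightarrow> nat \<Rightarrow> nat \<Rightarrow> nat" where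
  "code_fold K c a j = rec_nat a (\<lambda>i r.
     if (code_tl ^^ i) c \<noteq> 0 then code_cancel_cons (code_hd ((code_tl ^^ i) c) mod K) r else r) j"

lemma code_fold_list_encode:
  "code_fold K (list_encode L) (word_code v) j = word_code (cancel_cons_codes K (take j L) v)"
proof (induction j)
  case (Suc j)
  show ?case
  proof (cases "j < length L")
    case True
    then have "drop j L = L ! j # drop (Suc j) L" by (simp add: Cons_nth_drop_Suc)
    moreover have "list_encode (l # ls) \<noteq> 0" for l ls by simp
    ultimately show ?thesis using True Suc
      by (simp add: code_fold_def code_tl_funpow_list_encode take_Suc_conv_app_nth
          cancel_cons_codes_def word_code_cancel_cons del: list_encode.simps)
  qed (use Suc in \<open>simp add: code_fold_def code_tl_funpow_list_encode\<close>)
qed (simp add: code_fold_def cancel_cons_codes_def)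

lemma length_le_list_encode: "length xs \<le> list_encode xs"
proof (induction xs)
  case (Cons x xs)
  then show ?case using le_prod_encode_2[of "list_encode xs" x] by simp
qed simp

lemma code_fold_self:
  "code_fold K c (word_code v) c = word_code (cancel_cons_codes K (list_decode c) v)"
  using code_fold_list_encode[of K "list_decode c" v c] length_le_list_encode[of "list_decode c"]
  by simp

definition prog_code_drop :: "recf" where
  "prog_code_drop = Pr 1 (Idf 1 0) (rf_tl 3 (Idf 3 1))"

lemma computes_prog_code_drop: "computes 2 prog_code_drop (\<lambda>xs. (code_tl ^^ (xs ! 0)) (xs ! 1))"
proof -
  have step: "computes 3 (rf_tl 3 (Idf 3 1)) (\<lambda>xs. code_tl (xs ! 1))"
    by (rule computes_rf_tl[OF computes_Idf]) simp
  have "rec_nat c (\<lambda>i r. code_tl r) j = (code_tl ^^ j) c" for c j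
    by (induction j) auto
  then show ?thesis
    unfolding prog_code_drop_def
    by (intro computes_cong[OF computes_Pr[OF computes_Idf step]])
      (auto simp: length_Suc_conv numeral_2_eq_2)
qed

definition prog_code_fold_step :: "nat \<Rightarrow> recf" where
  "prog_code_fold_step K =
    (let d = Cn 4 prog_code_drop [Idf 4 0, Idf 4 2]
     in rf_if 4 d (rf_cancel_cons 4 (rf_mod 4 K (rf_hd 4 d)) (Idf 4 1)) (Idf 4 1))"

definition prog_code_fold :: "nat \<Rightarrow> recf" where
  "prog_code_fold K = Pr 2 (Idf 2 1) (prog_code_fold_step K)"

lemma computes_prog_code_fold:
  assumes "0 < K"
  shows "computes 3 (prog_code_fold K) (\<lambda>xs. code_fold K (xs ! 1) (xs ! 2) (xs ! 0))"
proof -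
  have d: "computes 4 (Cn 4 prog_code_drop [Idf 4 0, Idf 4 2])
      (\<lambda>zs. (code_tl ^^ (zs ! 0)) (zs ! 2))"
    by (rule computes_cong[OF computes_Cn2[OF computes_prog_code_drop computes_Idf computes_Idf]])
      simp_all
  have step: "computes 4 (prog_code_fold_step K) (\<lambda>zs. if (code_tl ^^ (zs ! 0)) (zs ! 2) \<noteq> 0
      then code_cancel_cons (code_hd ((code_tl ^^ (zs ! 0)) (zs ! 2)) mod K) (zs ! 1) else zs ! 1)"
    unfolding prog_code_fold_step_def Let_def
    by (rule computes_rf_if[OF d computes_rf_cancel_cons[OF computes_rf_mod[OF assms
          computes_rf_hd[OF d]] computes_Idf] computes_Idf]) simp_all
  show ?thesis
    unfolding prog_code_fold_def
    by (rule computes_cong[OF computes_Pr[OF computes_Idf step]])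
      (auto simp: code_fold_def length_Suc_conv eval_nat_numeral cong: if_cong)
qed

definition prog_translate :: "nat \<Rightarrow> recf" where
  "prog_translate K = Cn 2 (prog_code_fold K) [Idf 2 0, Idf 2 0, Idf 2 1]"

lemma computes_prog_translate:
  assumes "0 < K"
  shows "computes 2 (prog_translate K) (\<lambda>xs. code_fold K (xs ! 0) (xs ! 1) (xs ! 0))"
proof -
  have "list_all2 (\<lambda>p P. computes 2 p P) [Idf 2 0, Idf 2 0, Idf 2 1]
      [\<lambda>xs. xs ! 0, \<lambda>xs. xs ! 0, \<lambda>xs. xs ! 1]"
    by (simp add: computes_Idf)
  moreover have "computes (length [Idf 2 0, Idf 2 0, Idf 2 1]) (prog_code_fold K)
      (\<lambda>xs. code_fold K (xs ! 1) (xs ! 2) (xs ! 0))"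
    using computes_prog_code_fold[OF assms] by (simp add: numeral_3_eq_3)
  ultimately show ?thesis
    unfolding prog_translate_def by (rule computes_cong[OF computes_Cn]) simp
qed

section \<open>The decision procedure\<close>

definition find_prog :: "recf \<Rightarrow> recf" where
  "find_prog p = Cn 1 (rf_pred 2 p) [Mn 1 (rf_not 2 p), Idf 1 0]"

lemma rec_eval_find_prog:
  assumes "computes 2 p P" and "P [s, x] \<noteq> 0"
  shows "rec_eval (find_prog p) [x] (P [LEAST s. P [s, x] \<noteq> 0, x] - 1)"
proof -
  let ?s = "LEAST s. P [s, x] \<noteq> 0"
  have "computes (Suc 1) (rf_not 2 p) (\<lambda>xs. if P xs = 0 then 1 else 0)"
    using computes_rf_not[OF assms(1)] by (simp add: numeral_2_eq_2)
  from rec_eval_Mn_Least[OF this, of "[x]" s] have "rec_eval (Mn 1 (rf_not 2 p)) [x] ?s"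
    using assms(2) by (simp add: if_split_eq1)
  moreover have "rec_eval (rf_pred 2 p) [?s, x] (P [?s, x] - 1)"
    using computesD[OF computes_rf_pred[OF assms(1)]] by simp
  ultimately show ?thesis
    unfolding find_prog_def using ev_Id[of "[x]" 1 0]
    by (intro ev_Cn[of "[x]" 1 _ "[?s, x]"]) auto
qed

text \<open>For \<open>s = prod_encode (c, t)\<close>, run the program \<open>P\<close> with clock \<open>t\<close> on the
  \<open>c\<close>-th word \<open>u\<close> and on \<open>u w\<close>, where \<open>a\<close> is the code of \<open>w\<close>.\<close>

definition search_value :: "nat \<Rightarrow> recf \<Rightarrow> nat \<Rightarrow> nat \<Rightarrow> nat" where
  "search_value K P s a = (case prod_decode s of (c, t) \<Rightarrow>
     clocked_eval P t [code_fold K c 0 c, code_fold K c a c])"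

definition prog_search :: "nat \<Rightarrow> recf \<Rightarrow> recf" where
  "prog_search K P =
    Cn 2 (clocked_prog P 2)
      [Cn 2 prog_snd [Idf 2 0],
       Cn 2 (prog_translate K) [Cn 2 prog_fst [Idf 2 0], Zf],
       Cn 2 (prog_translate K) [Cn 2 prog_fst [Idf 2 0], Idf 2 1]]"

lemma computes_prog_search:
  assumes "0 < K"
  shows "computes 2 (prog_search K P) (\<lambda>xs. search_value K P (xs ! 0) (xs ! 1))"
proof -
  have c: "computes 2 (Cn 2 prog_fst [Idf 2 0]) (\<lambda>xs. fst (prod_decode (xs ! 0)))"
    by (rule computes_cong[OF computes_Cn1[OF computes_prog_fst computes_Idf]]) simp_all
  have "list_all2 (\<lambda>p P. computes 2 p P)
      [Cn 2 prog_snd [Idf 2 0],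
       Cn 2 (prog_translate K) [Cn 2 prog_fst [Idf 2 0], Zf],
       Cn 2 (prog_translate K) [Cn 2 prog_fst [Idf 2 0], Idf 2 1]]
      [\<lambda>xs. snd (prod_decode (xs ! 0)),
       \<lambda>xs. code_fold K (fst (prod_decode (xs ! 0))) 0 (fst (prod_decode (xs ! 0))),
       \<lambda>xs. code_fold K (fst (prod_decode (xs ! 0))) (xs ! 1) (fst (prod_decode (xs ! 0)))]"
    by (auto intro!: computes_cong[OF computes_Cn1[OF computes_prog_snd computes_Idf]]
        computes_cong[OF computes_Cn2[OF computes_prog_translate[OF assms] c computes_Zf]]
        computes_cong[OF computes_Cn2[OF computes_prog_translate[OF assms] c computes_Idf]])
  moreover have "computes (length [Cn 2 prog_snd [Idf 2 0],
       Cn 2 (prog_translate K) [Cn 2 prog_fst [Idf 2 0], Zf],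
       Cn 2 (prog_translate K) [Cn 2 prog_fst [Idf 2 0], Idf 2 1]])
      (clocked_prog P 2) (\<lambda>ys. clocked_eval P (hd ys) (tl ys))"
    using computes_clocked_prog[of 2 P] by (simp add: numeral_3_eq_3)
  ultimately show ?thesis
    unfolding prog_search_def
    by (rule computes_cong[OF computes_Cn]) (simp add: search_value_def split: prod.split)
qed

lemma search_value_word_code:
  assumes "reduced w" and "prod_decode s = (c, t)"
  shows "search_value K P s (word_code w) =
    clocked_eval P t [word_code (enum_word K c), word_code (fg_mult (enum_word K c) w)]"
  using assms code_fold_self[of K c "[]"] code_fold_self[of K c w]
    cancel_cons_codes_eq_fg_mult[OF assms(1)]
  by (simp add: search_value_def enum_word_def)

lemma ex_search_value_nonzero:
  assumes "a \<in> free_group_words k" "reduced w"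
    and "rec_eval P [word_code a, word_code (fg_mult a w)] r"
  shows "\<exists>s. search_value (2 * k) P s (word_code w) \<noteq> 0"
proof -
  obtain t where "clocked_eval P t [word_code a, word_code (fg_mult a w)] = Suc r"
    using eventually_clocked_eval[OF assms(3)] by (force simp: eventually_at_top_linorder)
  then have "search_value (2 * k) P (prod_encode (list_encode (rev (map letter_code a)), t))
      (word_code w) \<noteq> 0"
    using search_value_word_code[OF assms(2)] enum_word_list_encode[OF assms(1)] by simp
  then show ?thesis by blast
qed

lemma rec_eval_of_search_value:
  assumes "reduced w" and "search_value K P s (word_code w) = Suc r"
  shows "\<exists>c. rec_eval P [word_code (enum_word K c), word_code (fg_mult (enum_word K c) w)] r"
  using assms search_value_word_code[OF assms(1), of s "fst (prod_decode s)" "snd (prod_decode s)"]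
  by (auto intro: rec_eval_of_clocked_eval)

lemma word_problem_solvable_no_generators: "word_problem_solvable G 0 x"
proof -
  have "rec_eval (rf_const 1 1) [word_code w] (if word_val G x w = \<one>\<^bsub>G\<^esub> then 1 else 0)"
    if "w \<in> free_group_words 0" for w
    using that computesD[OF computes_rf_const[of 1 1], of "[word_code w]"]
    by (cases w) (auto simp: free_group_words_def word_val_def)
  then show ?thesis unfolding word_problem_solvable_def by blast
qed

context word_valuation
begin

lemma word_problem_solvable_if_halts_on_translates:
  assumes "0 < k"
    and correct: "\<forall>u\<in>free_group_words k. \<forall>v\<in>free_group_words k. \<forall>r.
      rec_eval P [word_code u, word_code v] r \<longrightarrow>
      r = (if word_val G x u = word_val G x v then 1 else 0)"
    and halts: "\<And>w. w \<in> free_group_words k \<Longrightarrow>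
      \<exists>a\<in>free_group_words k. \<exists>r. rec_eval P [word_code a, word_code (fg_mult a w)] r"
  shows "word_problem_solvable G k x"
proof -
  let ?V = "search_value (2 * k) P"
  have "rec_eval (find_prog (prog_search (2 * k) P)) [word_code w]
      (if word_val G x w = \<one> then 1 else 0)" if w: "w \<in> free_group_words k" for w
  proof -
    have "reduced w" using w by (simp add: free_group_words_def)
    with halts[OF w] obtain s where "?V s (word_code w) \<noteq> 0"
      using ex_search_value_nonzero by blast
    then have found: "?V (LEAST s. ?V s (word_code w) \<noteq> 0) (word_code w) \<noteq> 0"
      by (rule LeastI)
    have "computes 2 (prog_search (2 * k) P) (\<lambda>xs. ?V (xs ! 0) (xs ! 1))"
      using computes_prog_search \<open>0 < k\<close> by simp
    from rec_eval_find_prog[OF this, of s "word_code w"] \<open>?V s (word_code w) \<noteq> 0\<close>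
    obtain r where answer: "rec_eval (find_prog (prog_search (2 * k) P)) [word_code w] r"
      and "?V (LEAST s. ?V s (word_code w) \<noteq> 0) (word_code w) = Suc r"
      using found by (auto simp: gr0_conv_Suc)
    then obtain c where run: "rec_eval P [word_code (enum_word (2 * k) c),
        word_code (fg_mult (enum_word (2 * k) c) w)] r"
      using rec_eval_of_search_value[OF \<open>reduced w\<close>] by blast
    have a: "enum_word (2 * k) c \<in> free_group_words k"
      by (rule enum_word_in_free_group_words[OF \<open>0 < k\<close>])
    with correct run fg_mult_closed[OF a w] have "r =
        (if word_val G x (enum_word (2 * k) c) = word_val G x (fg_mult (enum_word (2 * k) c) w)
         then 1 else 0)"
      by blast
    with answer show ?thesis by (simp add: word_val_eq_fg_mult_iff[OF a w])
  qed
  then show ?thesis unfolding word_problem_solvable_def by blast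
qed

end

theorem theorem2p9:
  fixes G :: "('g, 'b) monoid_scheme" and k :: nat and x :: "nat \<Rightarrow> 'g"
    and S :: "letter list set"
  assumes "group G"
    and "x ` {..<k} \<subseteq> carrier G"
    and "generate G (x ` {..<k}) = carrier G"
    and "S \<subseteq> free_group_words k"
    and "UB_generic k S"
    and "equality_problem_solvable_on G k x (S \<times> S)"
  shows "word_problem_solvable G k x"
proof (cases "k = 0")
  case True
  then show ?thesis using word_problem_solvable_no_generators by simp
next
  case False
  interpret word_valuation G k x
    using assms(1,2) by (simp add: word_valuation_def word_valuation_axioms_def)
  obtain P where halts: "\<forall>(u, v)\<in>S \<times> S. \<exists>r. rec_eval P [word_code u, word_code v] r"
    and correct: "\<forall>u\<in>free_group_words k. \<forall>v\<in>free_group_words k. \<forall>r.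
      rec_eval P [word_code u, word_code v] r \<longrightarrow>
      r = (if word_val G x u = word_val G x v then 1 else 0)"
    using assms(6) unfolding equality_problem_solvable_on_def by blast
  show ?thesis
  proof (rule word_problem_solvable_if_halts_on_translates[OF _ correct])
    fix w assume "w \<in> free_group_words k"
    then obtain a where "a \<in> S" and "fg_mult a w \<in> S"
      using UB_generic_ex_pair[OF assms(4,5)] by blast
    then show "\<exists>a\<in>free_group_words k. \<exists>r. rec_eval P [word_code a, word_code (fg_mult a w)] r"
      using halts assms(4) by blast
  qed (use False in simp)
qed

end
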